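(* Let $X$ be a compact $\ell_1$-convex subset of $\mathbb{R}^n$. Then for $0\le j\le k\le n$, \[ \int_{\mathrm{Graff}_{n,k}} V_j(X\cap A)\,dA=\binom{n+j-k}{j}V_{n+j-k}(X). \] In particular, for $0\le k\le n$, the set $\{A\in\mathrm{Graff}_{n,k}: X\cap A\neq\emptyset\}$ has measure $V_{n-k}(X)$.
   Context: A subset $X\subseteq\mathbb{R}^n$ is $\ell_1$-convex if any two of its points $x,x'$ are joined by a map $\gamma\colon[0,D]\to X$, $D=\sum_i|x_i-x'_i|$, with $\gamma(0)=x,\gamma(D)=x'$ and $\sum_i|\gamma_i(t)-\gamma_i(t')|=|t-t'|$. $G_{n,k}$ is the set of $k$-dimensional coordinate subspaces of $\mathbb{R}^n$ (spanned by $k$ standard basis vectors); $P^\perp$ is the orthogonal complement and $\pi_P$ orthogonal projection. $\mathrm{Graff}_{n,k}$ is the set of $k$-dimensional affine subspaces parallel to some element of $G_{n,k}$; each is uniquely $P+q$ with $P\in G_{n,k}$, $q\in P^\perp$, so $\mathrm{Graff}_{n,k}\cong\coprod_{P\in G_{n,k}}P^\perp$, and it carries the measure obtained by summing Lebesgue measure $\mathrm{Vol}_{n-k}$ on each $P^\perp$. The $i$th $\ell_1$-intrinsic volume of a compact $\ell_1$-convex set $Y$ lying in $\mathbb{R}^n$ is $V_i(Y)=\sum_{P\in G_{n,i}}\mathrm{Vol}_i(\pi_PY)$; for $Y\subseteq A$ with $A$ an affine coordinate-parallel subspace, $V_i(Y)$ is computed in $\mathbb{R}^n$ (this agrees with computing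 intrinsically in $A$). For sets $X\cap A$ not necessarily $\ell_1$-convex the integrand is understood via this same formula. *)

theory Defs
  imports "HOL-Analysis.Analysis" "HOL-Probability.Probability"
begin

text \<open>Points of R^n are vectors of type real^'n with n = CARD('n).
  A k-dimensional coordinate subspace P in G_{n,k} is identified with the set S of
  the k coordinate indices spanning it.\<close>

definition l1dist :: "real^'n \<Rightarrow> real^'n \<Rightarrow> real" where
  "l1dist x y = (\<Sum>i\<in>UNIV. \<bar>x$i - y$i\<bar>)"

definition l1_convex :: "(real^'n) set \<Rightarrow> bool" where
  "l1_convex X \<longleftrightarrow> (\<forall>x\<in>X. \<forall>x'\<in>X. \<exists>\<gamma> :: real \<Rightarrow> real^'n.
      \<gamma> 0 = x \<and> \<gamma> (l1dist x x') = x' \<and>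
      (\<forall>t\<in>{0..l1dist x x'}. \<gamma> t \<in> X) \<and>
      (\<forall>t\<in>{0..l1dist x x'}. \<forall>t'\<in>{0..l1dist x x'}. l1dist (\<gamma> t) (\<gamma> t') = \<bar>t - t'\<bar>))"

text \<open>Orthogonal projection onto the coordinate subspace spanned by the coordinates in S,
  expressed in the coordinates of that subspace (an element of R^S).\<close>
definition coord_proj :: "'n set \<Rightarrow> real^'n \<Rightarrow> ('n \<Rightarrow> real)" where
  "coord_proj S x = restrict (\<lambda>i. x$i) S"

abbreviation lebesgue_on_coords :: "'n set \<Rightarrow> ('n \<Rightarrow> real) measure" where
  "lebesgue_on_coords S \<equiv> PiM S (\<lambda>_. lborel)"

definition l1_intrinsic_volume :: "nat \<Rightarrow> (real^'n::finite) set \<Rightarrow> ennreal" where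
  "l1_intrinsic_volume i Y =
     (\<Sum>S\<in>{S :: 'n set. card S = i}. emeasure (lebesgue_on_coords S) (coord_proj S ` Y))"

text \<open>The affine flat P + q, where P is spanned by the coordinates in S and
  q in P^perp is given by its coordinates outside S.\<close>
definition coord_flat :: "'n set \<Rightarrow> ('n \<Rightarrow> real) \<Rightarrow> (real^'n) set" where
  "coord_flat S q = {x. \<forall>i\<in>-S. x$i = q i}"

text \<open>Integral over Graff_{n,k} = disjoint union over P in G_{n,k} of P^perp,
  each with Lebesgue measure Vol_{n-k}.\<close>
definition graff_integral :: "nat \<Rightarrow> ((real^'n::finite) set \<Rightarrow> ennreal) \<Rightarrow> ennreal" where
  "graff_integral k f =
     (\<Sum>S\<in>{S :: 'n set. card S = k}. \<integral>\<^sup>+ q. f (coord_flat S q) \<partial>(lebesgue_on_coords (-S)))"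

definition graff_measure :: "nat \<Rightarrow> (real^'n::finite) set set \<Rightarrow> ennreal" where
  "graff_measure k \<A> = graff_integral k (indicator \<A>)"

end

theory Submission
  imports Defs
begin

text \<open>Let the flat \<open>P + q\<close> be spanned by the coordinates S, \<open>card S = k\<close>, and let T be a set of
  j coordinates. The projection of \<open>X \<inter> (P + q)\<close> onto the coordinates T is null unless
  \<open>T \<subseteq> S\<close>; if \<open>T \<subseteq> S\<close>, it is the section over q of the projection of X onto the coordinates
  \<open>-S \<union> T\<close>, so by Fubini its integral over q is \<open>Vol_{n-k+j}\<close> of that projection. Summing over
  S and T, the map \<open>(S, T) \<mapsto> -S \<union> T\<close> hits every (n+j-k)-set U exactly \<open>(n+j-k choose j)\<close>
  times (once for every (n-k)-subset \<open>-S\<close> of U). The second claim is the case \<open>j = 0\<close>,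
  since \<open>V_0\<close> is the indicator of non-emptiness.\<close>

lemma card_Compl: "card (- (A :: 'n::finite set)) = CARD('n) - card A"
  by (metis Compl_eq_Diff_UNIV card_Diff_subset finite subset_UNIV)

lemma l1_intrinsic_volume_0:
  fixes Y :: "(real^'n) set"
  shows "l1_intrinsic_volume 0 Y = (if Y = {} then 0 else 1)"
proof -
  have "{S :: 'n set. card S = 0} = {{}}"
    by (auto simp: card_eq_0_iff)
  moreover have "coord_proj {} ` Y = (if Y = {} then {} else {\<lambda>_. undefined})"
    by (auto simp: coord_proj_def restrict_def)
  ultimately show ?thesis
    by (simp add: l1_intrinsic_volume_def)
qed

lemma sigma_finite_lebesgue_on_coords:
  "sigma_finite_measure (lebesgue_on_coords (I :: 'n::finite set))"
proof -
  interpret finite_product_sigma_finite "\<lambda>_. lborel" I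
    by standard auto
  show ?thesis
    by (rule sigma_finite_measure_axioms)
qed

text \<open>The projection factors as the continuous coordinate-zeroing map of \<open>real^'n\<close>, whose image
  of K is compact, followed by the inverse of the measurable embedding of \<open>R^S\<close> into \<open>real^'n\<close>.\<close>
lemma sets_coord_proj_compact:
  fixes K :: "(real^'n) set"
  assumes "compact K"
  shows "coord_proj S ` K \<in> sets (lebesgue_on_coords S)"
proof -
  define E :: "('n \<Rightarrow> real) \<Rightarrow> real^'n" where "E = (\<lambda>y. \<chi> i. if i \<in> S then y i else 0)"
  define P :: "real^'n \<Rightarrow> real^'n" where "P = (\<lambda>x. \<chi> i. if i \<in> S then x$i else 0)"
  have "continuous_on UNIV P"
    unfolding P_def
    by (intro continuous_on_vec_lambda, case_tac "i \<in> S") (auto intro: continuous_on_component)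
  then have "P ` K \<in> sets borel"
    using assms by (metis compact_continuous_image continuous_on_subset compact_imp_closed
        borel_closed subset_UNIV)
  moreover have "E \<in> borel_measurable (lebesgue_on_coords S)"
  proof (subst borel_measurable_euclidean_space, intro ballI)
    fix b :: "real^'n" assume "b \<in> Basis"
    then obtain i where b: "b = axis i 1"
      by (auto simp: Basis_vec_def)
    have "(\<lambda>x. E x \<bullet> b) = (\<lambda>x. if i \<in> S then x i else 0)"
      by (auto simp: b E_def inner_axis)
    then show "(\<lambda>x. E x \<bullet> b) \<in> borel_measurable (lebesgue_on_coords S)"
      by (cases "i \<in> S") auto
  qed
  moreover have "coord_proj S ` K = E -` (P ` K) \<inter> space (lebesgue_on_coords S)"
  proof safe
    fix x assume "x \<in> K"
    then show "coord_proj S x \<in> E -` P ` K"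
      by (auto simp: E_def P_def coord_proj_def intro!: image_eqI[where x=x] ext)
    show "coord_proj S x \<in> space (lebesgue_on_coords S)"
      by (auto simp: space_PiM coord_proj_def)
  next
    fix y x
    assume y: "y \<in> space (lebesgue_on_coords S)" and "x \<in> K" and e: "E y = P x"
    have "y i = coord_proj S x i" for i
    proof (cases "i \<in> S")
      case True
      then show ?thesis
        using arg_cong[OF e, of "\<lambda>v. v $ i"] by (simp add: E_def P_def coord_proj_def)
    next
      case False
      then show ?thesis
        using y by (auto simp: space_PiM coord_proj_def PiE_def extensional_def)
    qed
    then show "y \<in> coord_proj S ` K"
      using \<open>x \<in> K\<close> by blast
  qed
  ultimately show ?thesis
    by (metis measurable_sets)
qed

lemma emeasure_coord_proj_flat_eq_0:
  assumes "i \<in> T" "i \<notin> S"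
  shows "emeasure (lebesgue_on_coords T) (coord_proj T ` (X \<inter> coord_flat S q)) = 0"
proof -
  interpret product_sigma_finite "\<lambda>_. lborel"
    by standard
  define A where "A = (\<lambda>j. if j = i then {q i} else (UNIV :: real set))"
  have "coord_proj T ` (X \<inter> coord_flat S q) \<subseteq> PiE T A"
    using assms by (auto simp: coord_proj_def coord_flat_def A_def)
  moreover have "PiE T A \<in> sets (lebesgue_on_coords T)"
    by (intro sets_PiM_I_finite) (auto simp: A_def)
  moreover have "emeasure (lebesgue_on_coords T) (PiE T A) = (\<Prod>j\<in>T. emeasure lborel (A j))"
    by (rule emeasure_PiM) (auto simp: A_def)
  moreover have "(\<Prod>j\<in>T. emeasure lborel (A j)) = 0"
    using assms by (intro prod_zero) (auto simp: A_def)
  ultimately show ?thesis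
    by (metis emeasure_mono le_zero_eq)
qed

lemma coord_proj_flat_eq_section:
  assumes "T \<subseteq> S" and q: "q \<in> space (lebesgue_on_coords (-S))"
  shows "Pair q -` (merge (-S) T -` coord_proj (-S \<union> T) ` X
            \<inter> space (lebesgue_on_coords (-S) \<Otimes>\<^sub>M lebesgue_on_coords T))
         = coord_proj T ` (X \<inter> coord_flat S q)"
proof (intro equalityI subsetI)
  have disj: "-S \<inter> T = {}"
    using assms by auto
  fix y
  assume "y \<in> Pair q -` (merge (-S) T -` coord_proj (-S \<union> T) ` X
            \<inter> space (lebesgue_on_coords (-S) \<Otimes>\<^sub>M lebesgue_on_coords T))"
  then obtain x where x: "x \<in> X" "merge (-S) T (q, y) = coord_proj (-S \<union> T) x"
    and y: "y \<in> space (lebesgue_on_coords T)"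
    using q by (auto simp: space_pair_measure)
  have merge_at: "merge (-S) T (q, y) i = coord_proj (-S \<union> T) x i" for i
    using x by simp
  have "x $ i = q i" if "i \<notin> S" for i
    using merge_at[of i] that by (simp add: coord_proj_def merge_def)
  then have "x \<in> coord_flat S q"
    by (simp add: coord_flat_def)
  moreover have "y i = coord_proj T x i" for i
    using merge_at[of i] disj y
    by (cases "i \<in> T") (auto simp: space_PiM coord_proj_def PiE_def extensional_def)
  ultimately show "y \<in> coord_proj T ` (X \<inter> coord_flat S q)"
    using x by blast
next
  have disj: "-S \<inter> T = {}"
    using assms by auto
  fix z
  assume "z \<in> coord_proj T ` (X \<inter> coord_flat S q)"
  then obtain x where z: "z = coord_proj T x" and x: "x \<in> X" "x \<in> coord_flat S q"
    by blast
  have "merge (-S) T (q, coord_proj T x) = coord_proj (-S \<union> T) x"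
    using x(2) q disj
    by (auto simp: merge_def coord_proj_def coord_flat_def space_PiM PiE_def extensional_def)
  moreover have "(q, coord_proj T x) \<in> space (lebesgue_on_coords (-S) \<Otimes>\<^sub>M lebesgue_on_coords T)"
    using q by (auto simp: space_pair_measure space_PiM coord_proj_def)
  ultimately show "z \<in> Pair q -` (merge (-S) T -` coord_proj (-S \<union> T) ` X
      \<inter> space (lebesgue_on_coords (-S) \<Otimes>\<^sub>M lebesgue_on_coords T))"
    using x z by auto
qed

lemma
  fixes X :: "(real^'n) set"
  assumes "compact X" "T \<subseteq> S"
  shows borel_measurable_emeasure_coord_proj_flat:
      "(\<lambda>q. emeasure (lebesgue_on_coords T) (coord_proj T ` (X \<inter> coord_flat S q)))
         \<in> borel_measurable (lebesgue_on_coords (-S))"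
    and emeasure_coord_proj_eq_nn_integral_flat:
      "emeasure (lebesgue_on_coords (-S \<union> T)) (coord_proj (-S \<union> T) ` X)
         = (\<integral>\<^sup>+ q. emeasure (lebesgue_on_coords T) (coord_proj T ` (X \<inter> coord_flat S q))
              \<partial>lebesgue_on_coords (-S))"
proof -
  interpret product_sigma_finite "\<lambda>_. lborel"
    by standard
  interpret T: sigma_finite_measure "lebesgue_on_coords T"
    by (rule sigma_finite_lebesgue_on_coords)
  define B where "B = coord_proj (-S \<union> T) ` X"
  define Q where "Q = merge (-S) T -` B \<inter> space (lebesgue_on_coords (-S) \<Otimes>\<^sub>M lebesgue_on_coords T)"
  have B: "B \<in> sets (lebesgue_on_coords (-S \<union> T))"
    unfolding B_def using assms(1) by (rule sets_coord_proj_compact)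
  have merge: "merge (-S) T \<in> measurable (lebesgue_on_coords (-S) \<Otimes>\<^sub>M lebesgue_on_coords T)
      (lebesgue_on_coords (-S \<union> T))"
    by (rule measurable_merge)
  have Q: "Q \<in> sets (lebesgue_on_coords (-S) \<Otimes>\<^sub>M lebesgue_on_coords T)"
    unfolding Q_def using merge B by (rule measurable_sets)
  have section_eq: "emeasure (lebesgue_on_coords T) (Pair q -` Q)
      = emeasure (lebesgue_on_coords T) (coord_proj T ` (X \<inter> coord_flat S q))"
    if "q \<in> space (lebesgue_on_coords (-S))" for q
    unfolding Q_def B_def using coord_proj_flat_eq_section[OF assms(2) that] by simp
  show "(\<lambda>q. emeasure (lebesgue_on_coords T) (coord_proj T ` (X \<inter> coord_flat S q)))
      \<in> borel_measurable (lebesgue_on_coords (-S))"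
    using T.measurable_emeasure_Pair[OF Q] section_eq measurable_cong by (metis (no_types, lifting))
  have "emeasure (lebesgue_on_coords (-S \<union> T)) B
      = emeasure (distr (lebesgue_on_coords (-S) \<Otimes>\<^sub>M lebesgue_on_coords T)
          (lebesgue_on_coords (-S \<union> T)) (merge (-S) T)) B"
    using assms(2) by (subst distr_merge) auto
  also have "\<dots> = emeasure (lebesgue_on_coords (-S) \<Otimes>\<^sub>M lebesgue_on_coords T) Q"
    unfolding Q_def using merge B by (rule emeasure_distr)
  also have "\<dots> = (\<integral>\<^sup>+ q. emeasure (lebesgue_on_coords T) (Pair q -` Q) \<partial>lebesgue_on_coords (-S))"
    using Q by (rule T.emeasure_pair_measure_alt)
  also have "\<dots> = (\<integral>\<^sup>+ q. emeasure (lebesgue_on_coords T) (coord_proj T ` (X \<inter> coord_flat S q))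
      \<partial>lebesgue_on_coords (-S))"
    by (intro nn_integral_cong section_eq)
  finally show "emeasure (lebesgue_on_coords (-S \<union> T)) (coord_proj (-S \<union> T) ` X)
      = (\<integral>\<^sup>+ q. emeasure (lebesgue_on_coords T) (coord_proj T ` (X \<inter> coord_flat S q))
          \<partial>lebesgue_on_coords (-S))"
    by (simp add: B_def)
qed

lemma nn_integral_l1_intrinsic_volume_flat:
  fixes X :: "(real^'n) set"
  assumes "compact X"
  shows "(\<integral>\<^sup>+ q. l1_intrinsic_volume j (X \<inter> coord_flat S q) \<partial>lebesgue_on_coords (-S))
       = (\<Sum>T\<in>{T. card T = j \<and> T \<subseteq> S}.
            emeasure (lebesgue_on_coords (-S \<union> T)) (coord_proj (-S \<union> T) ` X))"
proof -
  define m where "m T q = emeasure (lebesgue_on_coords T) (coord_proj T ` (X \<inter> coord_flat S q))"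
    for T q
  have "l1_intrinsic_volume j (X \<inter> coord_flat S q) = (\<Sum>T\<in>{T. card T = j \<and> T \<subseteq> S}. m T q)" for q
    unfolding l1_intrinsic_volume_def m_def
    by (rule sum.mono_neutral_right) (auto intro: emeasure_coord_proj_flat_eq_0)
  then have "(\<integral>\<^sup>+ q. l1_intrinsic_volume j (X \<inter> coord_flat S q) \<partial>lebesgue_on_coords (-S))
      = (\<integral>\<^sup>+ q. (\<Sum>T\<in>{T. card T = j \<and> T \<subseteq> S}. m T q) \<partial>lebesgue_on_coords (-S))"
    by simp
  also have "\<dots> = (\<Sum>T\<in>{T. card T = j \<and> T \<subseteq> S}. \<integral>\<^sup>+ q. m T q \<partial>lebesgue_on_coords (-S))"
    by (rule nn_integral_sum) (auto simp: m_def intro: borel_measurable_emeasure_coord_proj_flat[OF assms])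
  also have "\<dots> = (\<Sum>T\<in>{T. card T = j \<and> T \<subseteq> S}.
      emeasure (lebesgue_on_coords (-S \<union> T)) (coord_proj (-S \<union> T) ` X))"
    by (rule sum.cong) (auto simp: m_def emeasure_coord_proj_eq_nn_integral_flat[OF assms])
  finally show ?thesis .
qed

text \<open>The pairs \<open>(S, T)\<close> with \<open>T \<subseteq> S\<close> correspond bijectively to the pairs \<open>(U, W)\<close> with
  \<open>W \<subseteq> U\<close>, via \<open>U = -S \<union> T\<close> and \<open>W = -S\<close>.\<close>
lemma sum_subsets_Compl_Un_double_count:
  fixes f :: "'n::finite set \<Rightarrow> 'a::semiring_1"
  assumes "j \<le> k" "k \<le> CARD('n)"
  shows "(\<Sum>S\<in>{S. card S = k}. \<Sum>T\<in>{T. card T = j \<and> T \<subseteq> S}. f (-S \<union> T))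
       = of_nat ((CARD('n) + j - k) choose j) * (\<Sum>U\<in>{U. card U = CARD('n) + j - k}. f U)"
proof -
  let ?n = "CARD('n)"
  let ?ST = "Sigma {S :: 'n set. card S = k} (\<lambda>S. {T. card T = j \<and> T \<subseteq> S})"
  let ?UW = "Sigma {U :: 'n set. card U = ?n + j - k} (\<lambda>U. {W. W \<subseteq> U \<and> card W = ?n - k})"
  have "(\<Sum>S\<in>{S. card S = k}. \<Sum>T\<in>{T. card T = j \<and> T \<subseteq> S}. f (-S \<union> T))
      = (\<Sum>(S, T)\<in>?ST. f (-S \<union> T))"
    by (subst sum.Sigma) auto
  also have "\<dots> = (\<Sum>(U, W)\<in>?UW. f U)"
  proof (rule sum.reindex_bij_witness[where i = "\<lambda>(U, W). (-W, U - W)" and j = "\<lambda>(S, T). (-S \<union> T, -S)"])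
    fix p assume "p \<in> ?UW"
    then obtain U W where p: "p = (U, W)" "W \<subseteq> U" "card U = ?n + j - k" "card W = ?n - k"
      by auto
    moreover have "card (-W) = k"
      using p assms by (simp add: card_Compl)
    moreover have "card (U - W) = j"
      using p assms by (simp add: card_Diff_subset)
    ultimately show "(case case p of (U, W) \<Rightarrow> (-W, U - W) of (S, T) \<Rightarrow> (-S \<union> T, -S)) = p"
      and "(case p of (U, W) \<Rightarrow> (-W, U - W)) \<in> ?ST"
      by auto
  next
    fix p assume "p \<in> ?ST"
    then obtain S T where p: "p = (S, T)" "T \<subseteq> S" "card S = k" "card T = j"
      by auto
    then have "card (-S \<union> T) = card (-S) + card T"
      by (intro card_Un_disjoint) auto
    with p assms show "(case case p of (S, T) \<Rightarrow> (-S \<union> T, -S) of (U, W) \<Rightarrow> (-W, U - W)) = p"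
      and "(case p of (S, T) \<Rightarrow> (-S \<union> T, -S)) \<in> ?UW"
      by (auto simp: card_Compl)
  qed auto
  also have "\<dots> = (\<Sum>U\<in>{U. card U = ?n + j - k}. of_nat (card {W. W \<subseteq> U \<and> card W = ?n - k}) * f U)"
    by (subst sum.Sigma[symmetric]) auto
  also have "\<dots> = (\<Sum>U\<in>{U. card U = ?n + j - k}. of_nat ((?n + j - k) choose j) * f U)"
    using assms by (intro sum.cong refl) (simp add: n_subsets binomial_symmetric[of "?n - k"])
  finally show ?thesis
    by (simp add: sum_distrib_left)
qed

lemma graff_integral_l1_intrinsic_volume:
  fixes X :: "(real^'n) set"
  assumes "compact X" "j \<le> k" "k \<le> CARD('n)"
  shows "graff_integral k (\<lambda>A. l1_intrinsic_volume j (X \<inter> A))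
       = of_nat ((CARD('n) + j - k) choose j) * l1_intrinsic_volume (CARD('n) + j - k) X"
  unfolding graff_integral_def nn_integral_l1_intrinsic_volume_flat[OF assms(1)]
  unfolding l1_intrinsic_volume_def
  using assms(2,3) by (rule sum_subsets_Compl_Un_double_count)

lemma graff_measure_meets_eq_graff_integral_l1_intrinsic_volume_0:
  "graff_measure k {A. X \<inter> A \<noteq> {}} = graff_integral k (\<lambda>A. l1_intrinsic_volume 0 (X \<inter> A))"
  unfolding graff_measure_def
  by (rule arg_cong[where f = "graff_integral k"]) (auto simp: l1_intrinsic_volume_0 indicator_def)

theorem theorem7p1:
  fixes X :: "(real^'n) set"
  assumes "compact X" and "l1_convex X"
  shows "(\<forall>j k. j \<le> k \<and> k \<le> CARD('n) \<longrightarrow>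
            graff_integral k (\<lambda>A. l1_intrinsic_volume j (X \<inter> A))
              = of_nat ((CARD('n) + j - k) choose j) * l1_intrinsic_volume (CARD('n) + j - k) X)
       \<and> (\<forall>k. k \<le> CARD('n) \<longrightarrow>
            graff_measure k {A. X \<inter> A \<noteq> {}} = l1_intrinsic_volume (CARD('n) - k) X)"
proof (intro conjI allI impI)
  fix j k :: nat
  assume "j \<le> k \<and> k \<le> CARD('n)"
  then show "graff_integral k (\<lambda>A. l1_intrinsic_volume j (X \<inter> A))
      = of_nat ((CARD('n) + j - k) choose j) * l1_intrinsic_volume (CARD('n) + j - k) X"
    using graff_integral_l1_intrinsic_volume[OF assms(1)] by blast
next
  fix k :: nat
  assume "k \<le> CARD('n)"
  then show "graff_measure k {A. X \<inter> A \<noteq> {}} = l1_intrinsic_volume (CARD('n) - k) X"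
    using graff_integral_l1_intrinsic_volume[OF assms(1), of 0 k]
    by (simp add: graff_measure_meets_eq_graff_integral_l1_intrinsic_volume_0)
qed

end
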